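(* Let $a(t)=t^\alpha$ with $\alpha>0$, $\alpha\ne1$, and consider the two-dimensional Robertson–Walker spacetime $ds^2=-dt^2+a^2(t)\,d\chi^2$ with comoving worldlines $\beta_0:\chi=0$, $\beta_1:\chi=\chi_1$, $\beta_2:\chi=\chi_2$, where $\chi_2>\chi_1>0$. Fix $\tau_0>0$; suppose the spacelike geodesic orthogonal to $\beta_0$ at $(\tau_0,0)$ meets $\beta_1$ at $(\tau_1,\chi_1)$ and $\beta_2$, and the spacelike geodesic orthogonal to $\beta_1$ at $(\tau_1,\chi_1)$ meets $\beta_2$. Let $v_{\mathrm{kin}1}$ be the kinematic velocity of $\beta_1$ relative to $\beta_0$ at proper time $\tau_0$, $v_{\mathrm{kin}3}$ that of $\beta_2$ relative to $\beta_0$ at proper time $\tau_0$, and $v_{\mathrm{kin}2}$ that of $\beta_2$ relative to $\beta_1$ at proper time $\tau_1$. Then $$v_{\mathrm{kin}3}=\sqrt{1-G_\alpha^{2\alpha}\!\left(f^{-1}(v_{\mathrm{kin}1})+(1-v_{\mathrm{kin}1}^2)^{\frac{1-\alpha}{2\alpha}}f^{-1}(v_{\mathrm{kin}2})\right)},$$ where $f^{-1}(w)=\frac{\alpha}{\alpha-1}\left[F_\alpha\!\left(\sqrt{1-w^2}\right)-C_\alpha\right]$.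
   Context: Comoving worldlines $\chi=\text{const}$ are parametrized by $t$, their proper time. The kinematic velocity of a comoving particle at coordinate $\chi$ relative to a comoving observer $\beta_j$ ($\chi=\chi_j$) at proper time $\tau$: parallel transport the particle's 4-velocity along the spacelike geodesic orthogonal to $\beta_j$ at $(\tau,\chi_j)$ (from the event $(t,\chi)$ where it meets the particle) to $(\tau,\chi_j)$, write it as $\gamma(u+V)$ with $u=\partial_t$, $V\perp u$, $V=v_{\mathrm{kin}}a(\tau)^{-1}\partial_\chi$; it is known that $v_{\mathrm{kin}}=\mathrm{sgn}(\chi-\chi_j)\sqrt{1-a^2(t)/a^2(\tau)}$. Define $C_\alpha=\sqrt{\pi}\,\Gamma\!\left(\frac{1+\alpha}{2\alpha}\right)/\Gamma\!\left(\frac{1}{2\alpha}\right)$, $F_\alpha(z)=z^{\frac{1-\alpha}{\alpha}}\,{}_2F_1\!\left(\tfrac12,\tfrac{1-\alpha}{2\alpha};\tfrac{1+\alpha}{2\alpha};z^2\right)$ for $0<z<1$ (${}_2F_1$ the Gauss hypergeometric function), and $G_\alpha(v)=\left(F_\alpha^{-1}\!\left(C_\alpha+\frac{\alpha-1}{\alpha}v\right)\right)^{1/\alpha}$. It is known that for a comoving particle with $\chi>\chi_j$, $v_{\mathrm{kin}}=f(v)=\sqrt{1-G_\alpha^{2\alpha}(v)}$, where $v=\dot a(\tau)(\chi-\chi_j)$ is the Hubble velocity, and $f^{-1}$ is as given in the claim. *)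

theory Defs
  imports "HOL-Analysis.Analysis"
begin

definition scale :: "real \<Rightarrow> real \<Rightarrow> real" where
  "scale \<alpha> t = t powr \<alpha>"

definition scale' :: "real \<Rightarrow> real \<Rightarrow> real" where
  "scale' \<alpha> t = \<alpha> * t powr (\<alpha> - 1)"

text \<open>An affinely parametrised geodesic (T s, X s), s in the interval I, of the metric
  -dt^2 + a(t)^2 dchi^2, starting at (tau, chi_j) orthogonally to the comoving worldline
  chi = chi_j (i.e. T'(0) = 0, X'(0) nonzero: spacelike and orthogonal to d/dt).\<close>

definition orth_geodesic ::
  "real \<Rightarrow> real \<Rightarrow> real \<Rightarrow> (real \<Rightarrow> real) \<Rightarrow> (real \<Rightarrow> real) \<Rightarrow> real set \<Rightarrow> bool" where
  "orth_geodesic \<alpha> \<tau> cj T X I \<longleftrightarrow>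
     is_interval I \<and> 0 \<in> I \<and> T 0 = \<tau> \<and> X 0 = cj \<and> (\<forall>s\<in>I. 0 < T s) \<and>
     (\<exists>T' X'.
        T' 0 = 0 \<and> X' 0 \<noteq> 0 \<and>
        (\<forall>s\<in>I.
           (T has_real_derivative T' s) (at s within I) \<and>
           (X has_real_derivative X' s) (at s within I) \<and>
           (T' has_real_derivative
              (- scale \<alpha> (T s) * scale' \<alpha> (T s) * (X' s)\<^sup>2)) (at s within I) \<and>
           (X' has_real_derivative
              (- 2 * (scale' \<alpha> (T s) / scale \<alpha> (T s)) * T' s * X' s)) (at s within I)))"

text \<open>Kinematic velocity of the comoving particle at chi (met at time t by the geodesic
  orthogonal to beta_j at (tau, chi_j)) relative to beta_j at proper time tau; we use the
  known closed form given in the context.\<close>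

definition kin_vel :: "real \<Rightarrow> real \<Rightarrow> real \<Rightarrow> real \<Rightarrow> real \<Rightarrow> real" where
  "kin_vel \<alpha> \<tau> cj t c = sgn (c - cj) * sqrt (1 - (scale \<alpha> t)\<^sup>2 / (scale \<alpha> \<tau>)\<^sup>2)"

definition hyp2F1 :: "real \<Rightarrow> real \<Rightarrow> real \<Rightarrow> real \<Rightarrow> real" where
  "hyp2F1 a b c z =
     (\<Sum>n. pochhammer a n * pochhammer b n / (pochhammer c n * fact n) * z ^ n)"

definition C_const :: "real \<Rightarrow> real" where
  "C_const \<alpha> = sqrt pi * Gamma ((1 + \<alpha>) / (2 * \<alpha>)) / Gamma (1 / (2 * \<alpha>))"

definition F_fun :: "real \<Rightarrow> real \<Rightarrow> real" where
  "F_fun \<alpha> z = z powr ((1 - \<alpha>) / \<alpha>) *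
     hyp2F1 (1/2) ((1 - \<alpha>) / (2 * \<alpha>)) ((1 + \<alpha>) / (2 * \<alpha>)) (z\<^sup>2)"

definition G_fun :: "real \<Rightarrow> real \<Rightarrow> real" where
  "G_fun \<alpha> v = (inv_into {0<..<1} (F_fun \<alpha>) (C_const \<alpha> + (\<alpha> - 1) / \<alpha> * v)) powr (1 / \<alpha>)"

definition f_inv :: "real \<Rightarrow> real \<Rightarrow> real" where
  "f_inv \<alpha> w = \<alpha> / (\<alpha> - 1) * (F_fun \<alpha> (sqrt (1 - w\<^sup>2)) - C_const \<alpha>)"

end

theory Submission
  imports Defs
begin

text \<open>A geodesic orthogonal to the comoving worldline \<chi> = \<chi>_j at time \<tau> conserves a^2 \<chi>'
  (the Killing field of \<chi>-translations) and its speed, so along it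
  d\<chi>/dt = \<plusminus>1 / (a sqrt (1 - a^2 / a(\<tau>)^2)). For a = t^\<alpha> this integrates to an incomplete
  Beta function: with b = (1 - \<alpha>) / (2 \<alpha>) and x = (t/\<tau>)^(2\<alpha>), the comoving distance reached at
  time t is proportional to x^b 2F1(1/2, b; b + 1; x) - 2F1(1/2, b; b + 1; 1), and the value at 1
  is C_\<alpha> by the Beta integral. Hence f^-1 turns the kinematic velocity of a comoving particle
  into its Hubble velocity a'(\<tau>) \<Delta>\<chi>, which G_\<alpha> inverts, and the formula is additivity of
  comoving distances, \<chi>_2 = \<chi>_1 + (\<chi>_2 - \<chi>_1), rescaled by a'(\<tau>_1) (1 - v_1^2)^b = a'(\<tau>_0).\<close>

section \<open>The incomplete Beta series\<close>

text \<open>beta_prim b x = x^b 2F1(1/2, b; b + 1; x) = b B(x; b, 1/2) is an antiderivative of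
  b x^(b - 1) (1 - x)^(-1/2); half_binom n are the coefficients of (1 - x)^(-1/2).\<close>

definition half_binom :: "nat \<Rightarrow> real" where
  "half_binom n = pochhammer (1/2) n / fact n"

definition beta_coeff :: "real \<Rightarrow> nat \<Rightarrow> real" where
  "beta_coeff b n = half_binom n * (b / (b + real n))"

definition beta_series :: "real \<Rightarrow> real \<Rightarrow> real" where
  "beta_series b x = (\<Sum>n. beta_coeff b n * x ^ n)"

definition beta_prim :: "real \<Rightarrow> real \<Rightarrow> real" where
  "beta_prim b x = x powr b * beta_series b x"

lemma half_binom_0 [simp]: "half_binom 0 = 1"
  by (simp add: half_binom_def)

lemma half_binom_Suc: "half_binom (Suc n) = half_binom n * ((real n + 1/2) / (real n + 1))"
  by (simp add: half_binom_def pochhammer_rec' field_simps)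

lemma half_binom_pos: "0 < half_binom n"
  by (induction n) (auto simp: half_binom_Suc)

lemma half_binom_sq_le: "(half_binom n)\<^sup>2 * (2 * real n + 1) \<le> 1"
proof (induction n)
  case (Suc n)
  have "(half_binom (Suc n))\<^sup>2 * (2 * real (Suc n) + 1)
        = (half_binom n)\<^sup>2 * (2 * real n + 1)
          * ((2 * real n + 1) * (2 * real n + 3) / (4 * (real n + 1)\<^sup>2))"
    by (simp add: half_binom_Suc power2_eq_square field_simps)
  also have "\<dots> \<le> 1 * 1"
  proof (intro mult_mono)
    show "(2 * real n + 1) * (2 * real n + 3) / (4 * (real n + 1)\<^sup>2) \<le> 1"
      by (simp add: divide_le_eq power2_eq_square algebra_simps add_pos_nonneg)
  qed (use Suc in auto)
  finally show ?case by simp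
qed simp

lemma half_binom_sums:
  assumes "\<bar>x\<bar> < 1"
  shows "(\<lambda>n. half_binom n * x ^ n) sums (1 - x) powr (-1/2)"
proof -
  have "((-1/2::real) gchoose n) * (-x) ^ n = half_binom n * x ^ n" for n
  proof -
    have "((-1/2::real) gchoose n) * (-x) ^ n = ((-1) ^ n * (-1) ^ n) * half_binom n * x ^ n"
      by (simp add: gbinomial_pochhammer power_minus[of x] half_binom_def)
    also have "(-1::real) ^ n * (-1) ^ n = 1"
      by (simp add: power_mult_distrib[symmetric])
    finally show ?thesis by simp
  qed
  moreover have "(\<lambda>n. ((-1/2) gchoose n) * (-x) ^ n) sums (1 + (-x)) powr (-1/2)"
    using assms by (intro gen_binomial_real) simp
  ultimately show ?thesis by simp
qed

lemma abs_beta_coeff_le: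
  assumes "-1 < b" and "2 \<le> n"
  shows "\<bar>beta_coeff b n\<bar> \<le> 2 * \<bar>b\<bar> * real n powr (-3/2)"
proof -
  have n: "0 < real n" and bn: "real n / 2 \<le> b + real n"
    using assms by auto
  have "(half_binom n)\<^sup>2 * real n \<le> (half_binom n)\<^sup>2 * (2 * real n + 1)"
    by (intro mult_left_mono) auto
  then have "(half_binom n)\<^sup>2 \<le> 1 / real n"
    using half_binom_sq_le[of n] n by (simp add: le_divide_eq)
  then have "half_binom n \<le> sqrt (1 / real n)"
    using half_binom_pos[of n] real_le_rsqrt by blast
  also have "\<dots> = real n powr (-1/2)"
    using n by (simp add: powr_minus_divide powr_half_sqrt real_sqrt_divide)
  finally have c: "half_binom n \<le> real n powr (-1/2)" .
  have "\<bar>beta_coeff b n\<bar> = half_binom n * (\<bar>b\<bar> / (b + real n))"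
    using half_binom_pos[of n] bn n by (simp add: beta_coeff_def abs_mult)
  also have "\<dots> \<le> real n powr (-1/2) * (\<bar>b\<bar> / (real n / 2))"
    using c bn n by (intro mult_mono divide_left_mono) auto
  also have "\<dots> = 2 * \<bar>b\<bar> * (real n powr (-1/2) / real n)"
    using n by simp
  also have "real n powr (-1/2) / real n = real n powr (-3/2)"
    using powr_diff[of "real n" "-1/2" 1] n by simp
  finally show ?thesis .
qed

lemma summable_abs_beta_coeff:
  assumes "-1 < b"
  shows "summable (\<lambda>n. \<bar>beta_coeff b n\<bar>)"
proof (rule summable_comparison_test'[where N = 2])
  show "summable (\<lambda>n. 2 * \<bar>b\<bar> * real n powr (-3/2))"
    by (intro summable_mult) (simp add: summable_real_powr_iff)
qed (use abs_beta_coeff_le[OF assms] in simp)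

lemma hyp2F1_half_eq_beta_series:
  assumes "-1 < b" and "b \<noteq> 0"
  shows "hyp2F1 (1/2) b (b + 1) x = beta_series b x"
  unfolding hyp2F1_def beta_series_def
proof (rule suminf_cong)
  fix n
  have "b * pochhammer (b + 1) n = (b + real n) * pochhammer b n"
    using pochhammer_rec[of b n] pochhammer_rec'[of b n] by simp
  moreover have "0 < pochhammer (b + 1) n" and "b + real n \<noteq> 0"
    using assms by (auto intro!: pochhammer_pos) (cases n; simp)
  ultimately have "pochhammer b n / pochhammer (b + 1) n = b / (b + real n)"
    by (simp add: field_simps)
  moreover have "pochhammer (1/2) n * pochhammer b n / (pochhammer (b + 1) n * fact n)
      = half_binom n * (pochhammer b n / pochhammer (b + 1) n)"
    by (simp add: half_binom_def)
  ultimately show "pochhammer (1/2) n * pochhammer b n / (pochhammer (b + 1) n * fact n) * x ^ n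
        = beta_coeff b n * x ^ n"
    by (simp add: beta_coeff_def)
qed

lemma abs_beta_coeff_power_le:
  assumes "\<bar>x\<bar> \<le> 1"
  shows "\<bar>beta_coeff b n * x ^ n\<bar> \<le> \<bar>beta_coeff b n\<bar>"
  using assms by (simp add: abs_mult power_abs power_le_one mult_left_le)

lemma beta_series_sums:
  assumes "-1 < b" and "\<bar>x\<bar> \<le> 1"
  shows "(\<lambda>n. beta_coeff b n * x ^ n) sums beta_series b x"
  unfolding beta_series_def
  by (intro summable_sums summable_comparison_test'[OF summable_abs_beta_coeff[OF assms(1)]])
     (simp add: abs_beta_coeff_power_le assms(2))

lemma continuous_on_beta_series:
  assumes "-1 < b"
  shows "continuous_on {-1..1} (beta_series b)"
proof (rule uniform_limit_theorem)
  show "uniform_limit {-1..1} (\<lambda>n x. \<Sum>i<n. beta_coeff b i * x ^ i) (beta_series b) sequentially"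
    unfolding beta_series_def
    using summable_abs_beta_coeff[OF assms]
    by (intro Weierstrass_m_test[where M = "\<lambda>n. \<bar>beta_coeff b n\<bar>"])
       (auto simp: abs_beta_coeff_power_le)
qed (auto intro!: always_eventually continuous_intros)

text \<open>Holds termwise, because (b + n) beta_coeff b n = b half_binom n.\<close>

lemma beta_series_ode:
  assumes "-1 < b" "b \<noteq> 0" and "\<bar>x\<bar> < 1"
  obtains D where "(beta_series b has_real_derivative D) (at x)"
    and "b * beta_series b x + x * D = b * (1 - x) powr (-1/2)"
proof -
  have summ: "summable (\<lambda>n. beta_coeff b n * 1 ^ n)"
    using beta_series_sums[OF assms(1), of 1] by (simp add: sums_iff)
  define D where "D = (\<Sum>n. diffs (beta_coeff b) n * x ^ n)"
  have der: "(beta_series b has_real_derivative D) (at x)"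
    unfolding beta_series_def D_def
    by (rule termdiffs_strong[where K = 1]) (use summ assms(3) in auto)
  have "(\<lambda>n. diffs (beta_coeff b) n * x ^ n) sums D"
    unfolding D_def by (rule summable_sums, rule termdiff_converges[where K = 1])
      (use assms(3) beta_series_sums[OF assms(1)] in \<open>auto simp: sums_iff\<close>)
  then have "(\<lambda>n. x * (diffs (beta_coeff b) n * x ^ n)) sums (x * D)"
    by (rule sums_mult)
  then have "(\<lambda>n. real (Suc n) * beta_coeff b (Suc n) * x ^ Suc n) sums (x * D)"
    by (simp add: diffs_def mult_ac)
  then have "(\<lambda>n. real n * beta_coeff b n * x ^ n) sums (x * D)"
    by (subst (asm) sums_Suc_iff) simp
  moreover have "(\<lambda>n. b * (beta_coeff b n * x ^ n)) sums (b * beta_series b x)"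
    using assms by (intro sums_mult beta_series_sums) auto
  ultimately have "(\<lambda>n. b * (beta_coeff b n * x ^ n) + real n * beta_coeff b n * x ^ n)
      sums (b * beta_series b x + x * D)"
    by (intro sums_add)
  moreover have "b * (beta_coeff b n * x ^ n) + real n * beta_coeff b n * x ^ n
      = b * (half_binom n * x ^ n)" for n
  proof -
    have "b + real n \<noteq> 0" using assms by (cases n) auto
    have "b * (beta_coeff b n * x ^ n) + real n * beta_coeff b n * x ^ n
        = ((b + real n) * beta_coeff b n) * x ^ n"
      by (simp add: algebra_simps)
    also have "(b + real n) * beta_coeff b n = b * half_binom n"
      using \<open>b + real n \<noteq> 0\<close> by (simp add: beta_coeff_def)
    finally show ?thesis by simp
  qed
  ultimately have "(\<lambda>n. b * (half_binom n * x ^ n)) sums (b * beta_series b x + x * D)"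
    by simp
  moreover have "(\<lambda>n. b * (half_binom n * x ^ n)) sums (b * (1 - x) powr (-1/2))"
    by (intro sums_mult half_binom_sums assms(3))
  ultimately show ?thesis
    using that der sums_unique2 by blast
qed

lemma has_real_derivative_beta_prim:
  assumes "-1 < b" "b \<noteq> 0" and "0 < x" "x < 1"
  shows "(beta_prim b has_real_derivative b * x powr (b - 1) * (1 - x) powr (-1/2)) (at x)"
proof -
  obtain D where D: "(beta_series b has_real_derivative D) (at x)"
    and ode: "b * beta_series b x + x * D = b * (1 - x) powr (-1/2)"
    using beta_series_ode[OF assms(1,2), of x] assms(3,4) by auto
  have "(beta_prim b has_real_derivative b * x powr (b - 1) * beta_series b x + D * x powr b) (at x)"
    unfolding beta_prim_def [abs_def]
    by (rule DERIV_mult[OF has_real_derivative_powr[OF assms(3)] D])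
  moreover have "b * x powr (b - 1) * beta_series b x + D * x powr b
      = x powr (b - 1) * (b * beta_series b x + x * D)"
    using assms(3) by (simp add: powr_diff algebra_simps)
  ultimately show ?thesis
    unfolding ode by (simp add: mult_ac)
qed

lemma abs_beta_series_minus_one_le:
  assumes "-1 < b" "b \<noteq> 0" and "0 \<le> t" "t \<le> 1"
  shows "\<bar>beta_series b t - 1\<bar> \<le> t * (\<Sum>n. \<bar>beta_coeff b (Suc n)\<bar>)"
proof -
  define S where "S = (\<Sum>n. \<bar>beta_coeff b (Suc n)\<bar>)"
  have lhs: "(\<lambda>n. beta_coeff b (Suc n) * t ^ Suc n) sums (beta_series b t - 1)"
    using beta_series_sums[OF assms(1), of t] assms by (subst sums_Suc_iff) (simp add: beta_coeff_def)
  have rhs: "(\<lambda>n. t * \<bar>beta_coeff b (Suc n)\<bar>) sums (t * S)"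
    using summable_abs_beta_coeff[OF assms(1)] unfolding S_def
    by (intro sums_mult summable_sums) (subst summable_Suc_iff)
  have bound: "\<bar>beta_coeff b (Suc n) * t ^ Suc n\<bar> \<le> t * \<bar>beta_coeff b (Suc n)\<bar>" for n
  proof -
    have "\<bar>beta_coeff b (Suc n) * t ^ Suc n\<bar> = \<bar>beta_coeff b (Suc n)\<bar> * t ^ Suc n"
      using assms(3) by (simp add: abs_mult)
    also have "\<dots> \<le> \<bar>beta_coeff b (Suc n)\<bar> * t"
      using power_decreasing[of 1 "Suc n" t] assms(3,4) by (intro mult_left_mono) auto
    finally show ?thesis by (simp add: mult.commute)
  qed
  have "beta_series b t - 1 \<le> t * S"
    by (rule sums_le[OF _ lhs rhs]) (rule abs_le_D1[OF bound])
  moreover have "- (t * S) \<le> beta_series b t - 1"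
    by (rule sums_le[OF _ sums_minus[OF rhs] lhs]) (subst minus_le_iff, rule abs_le_D2[OF bound])
  ultimately show ?thesis
    unfolding S_def by linarith
qed

text \<open>Subtracting x^b sqrt (1 - x) cancels the singularity x^(b - 1) of the derivative of
  beta_prim at 0, which is not integrable for b < 0.\<close>

definition beta_prim_reg :: "real \<Rightarrow> real \<Rightarrow> real" where
  "beta_prim_reg b t = beta_prim b t - t powr b * sqrt (1 - t)"

lemma has_real_derivative_beta_prim_reg:
  assumes "-1 < b" "b \<noteq> 0" and "0 < t" "t < 1"
  shows "(beta_prim_reg b has_real_derivative (b + 1/2) * (t powr b * (1 - t) powr (-1/2))) (at t)"
proof -
  define s where "s = sqrt (1 - t)"
  define p where "p = t powr b"
  have s: "0 < s" "s * s = 1 - t" "(1 - t) powr (-1/2) = 1 / s"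
    using assms by (auto simp: s_def powr_minus_divide powr_half_sqrt)
  have "(beta_prim_reg b has_real_derivative
      b * (p / t) * (1 / s) - (b * (p / t) * s + p * (- (inverse s / 2)))) (at t)"
    unfolding beta_prim_reg_def [abs_def] s_def p_def using assms
    by (auto intro!: derivative_eq_intros has_real_derivative_beta_prim
        simp: powr_diff powr_minus_divide powr_half_sqrt)
  also have "b * (p / t) * (1 / s) - (b * (p / t) * s + p * (- (inverse s / 2)))
      = p / s * (b * (1 - s * s) / t + 1/2)"
    using s(1) assms(3) by (simp add: field_simps)
  also have "b * (1 - s * s) / t = b"
    using s(2) assms(3) by simp
  finally show ?thesis
    unfolding s(3) p_def by (simp add: field_simps)
qed

lemma continuous_on_beta_prim_reg:
  assumes "-1 < b" "b \<noteq> 0"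
  shows "continuous_on {0..1} (beta_prim_reg b)"
proof (rule continuous_on_IccI)
  define K where "K = (\<Sum>n. \<bar>beta_coeff b (Suc n)\<bar>) + 1"
  have bound: "\<bar>beta_prim_reg b t\<bar> \<le> K * t powr (b + 1)" if "0 < t" "t \<le> 1" for t
  proof -
    have "1 - t \<le> sqrt (1 - t)" and "sqrt (1 - t) \<le> 1"
      using that by (auto intro!: real_le_rsqrt simp: power2_eq_square mult_left_le)
    then have "\<bar>beta_series b t - sqrt (1 - t)\<bar> \<le> \<bar>beta_series b t - 1\<bar> + t"
      by linarith
    then have "\<bar>beta_series b t - sqrt (1 - t)\<bar> \<le> K * t"
      using abs_beta_series_minus_one_le[OF assms, of t] that
      by (simp add: K_def algebra_simps)
    have "\<bar>beta_prim_reg b t\<bar> = t powr b * \<bar>beta_series b t - sqrt (1 - t)\<bar>"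
      by (simp add: beta_prim_reg_def beta_prim_def abs_mult flip: right_diff_distrib)
    also have "\<dots> \<le> t powr b * (K * t)"
      by (rule mult_left_mono) (fact, simp)
    also have "\<dots> = K * t powr (b + 1)"
      using that by (simp add: powr_add)
    finally show ?thesis .
  qed
  have "((\<lambda>t. K * t powr (b + 1)) \<longlongrightarrow> 0) (at_right 0)"
    using assms
    by (intro tendsto_mult_right_zero tendsto_zero_powrI)
       (auto intro!: tendsto_intros eventually_at_rightI[of 0 1])
  then have "(beta_prim_reg b \<longlongrightarrow> 0) (at_right 0)"
    by (rule Lim_null_comparison[rotated]) (auto intro!: eventually_at_rightI[of 0 1] bound)
  then show "(beta_prim_reg b \<longlongrightarrow> beta_prim_reg b 0) (at_right 0)"
    by (simp add: beta_prim_reg_def beta_prim_def)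
  have "(beta_series b \<longlongrightarrow> beta_series b 1) (at_left 1)"
    using continuous_on_Icc_at_leftD[OF continuous_on_beta_series[OF assms(1)]] by simp
  then show "(beta_prim_reg b \<longlongrightarrow> beta_prim_reg b 1) (at_left 1)"
    unfolding beta_prim_reg_def [abs_def] beta_prim_def [abs_def]
    by (auto intro!: tendsto_eq_intros)
  show "beta_prim_reg b \<midarrow>x\<rightarrow> beta_prim_reg b x" if "0 < x" "x < 1" for x
    using DERIV_isCont[OF has_real_derivative_beta_prim_reg[OF assms that]] by (simp add: isCont_def)
qed simp

lemma beta_series_one:
  assumes "-1/2 < b" "b \<noteq> 0"
  shows "beta_series b 1 = sqrt pi * Gamma (b + 1) / Gamma (b + 1/2)"
proof -
  have b: "-1 < b" "b \<noteq> 0" using assms by auto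
  have "((\<lambda>t. (b + 1/2) * (t powr b * (1 - t) powr (-1/2)))
          has_integral beta_prim_reg b 1 - beta_prim_reg b 0) {0..1}"
    using continuous_on_beta_prim_reg[OF b] has_real_derivative_beta_prim_reg[OF b]
    by (intro fundamental_theorem_of_calculus_interior)
       (auto simp flip: has_real_derivative_iff_has_vector_derivative)
  moreover have "((\<lambda>t. (b + 1/2) * (t powr b * (1 - t) powr (-1/2)))
          has_integral (b + 1/2) * Beta (b + 1) (1/2)) {0..1}"
    using has_integral_Beta_real[of "b + 1" "1/2"] b by (intro has_integral_mult_right) simp
  ultimately have "beta_series b 1 = (b + 1/2) * Beta (b + 1) (1/2)"
    by (auto simp: beta_prim_reg_def beta_prim_def dest: has_integral_unique)
  moreover have "Gamma (b + 1/2 + 1) = (b + 1/2) * Gamma (b + 1/2)"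
    using assms by (intro Gamma_plus1) (auto simp: nonpos_Ints_altdef)
  moreover have "b + 1 + 1/2 = b + 1/2 + 1" by simp
  ultimately show ?thesis
    using assms by (simp add: Beta_def Gamma_one_half_real)
qed

lemma continuous_on_beta_prim:
  assumes "-1 < b"
  shows "continuous_on {0<..1} (beta_prim b)"
proof -
  have "continuous_on {0<..1} (beta_series b)"
    by (rule continuous_on_subset[OF continuous_on_beta_series[OF assms]]) auto
  then show ?thesis
    unfolding beta_prim_def [abs_def] by (intro continuous_intros) auto
qed

lemma inj_on_beta_prim:
  assumes "-1 < b" "b \<noteq> 0"
  shows "inj_on (beta_prim b) {0<..<1}"
proof -
  have mono: "b * beta_prim b x < b * beta_prim b y" if "0 < x" "x < y" "y < 1" for x y
  proof (rule DERIV_pos_imp_increasing_open[OF \<open>x < y\<close>])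
    show "\<exists>d. ((\<lambda>u. b * beta_prim b u) has_real_derivative d) (at u) \<and> 0 < d"
      if "x < u" "u < y" for u
    proof (intro exI conjI)
      show "((\<lambda>u. b * beta_prim b u) has_real_derivative
          b * (b * u powr (b - 1) * (1 - u) powr (-1/2))) (at u)"
        using that \<open>0 < x\<close> \<open>y < 1\<close> assms by (intro DERIV_cmult has_real_derivative_beta_prim) auto
      have "0 < u powr (b - 1) * (1 - u) powr (-1/2)"
        using that \<open>0 < x\<close> \<open>y < 1\<close> by simp
      moreover have "0 < b * b"
        using assms by (auto simp: zero_less_mult_iff linorder_neq_iff)
      ultimately have "0 < (b * b) * (u powr (b - 1) * (1 - u) powr (-1/2))"
        by (rule mult_pos_pos[rotated])
      then show "0 < b * (b * u powr (b - 1) * (1 - u) powr (-1/2))"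
        by (simp only: mult.assoc)
    qed
    show "continuous_on {x..y} (\<lambda>u. b * beta_prim b u)"
      using that assms
      by (intro continuous_at_imp_continuous_on ballI continuous_intros
          DERIV_isCont[OF has_real_derivative_beta_prim]) auto
  qed
  show ?thesis
  proof (rule linorder_inj_onI')
    fix x y :: real assume "x \<in> {0<..<1}" "y \<in> {0<..<1}" "x < y"
    then show "beta_prim b x \<noteq> beta_prim b y"
      using mono[of x y] by auto
  qed
qed

section \<open>Closed forms of the kinematic velocity\<close>

lemma beta_exponent_bounds:
  fixes \<alpha> :: real
  assumes "0 < \<alpha>" "\<alpha> \<noteq> 1"
  shows "-1/2 < (1 - \<alpha>) / (2 * \<alpha>)" "(1 - \<alpha>) / (2 * \<alpha>) \<noteq> 0"
  using assms by (auto simp: field_simps)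

text \<open>The comoving distance |\<chi> - \<chi>_j| at which the geodesic orthogonal to \<chi> = \<chi>_j at
  time \<tau> reaches time t (lemma orth_distance_T).\<close>

definition orth_distance :: "real \<Rightarrow> real \<Rightarrow> real \<Rightarrow> real" where
  "orth_distance \<alpha> \<tau> t =
     (beta_prim ((1 - \<alpha>) / (2 * \<alpha>)) ((t / \<tau>) powr (2 * \<alpha>)) - beta_prim ((1 - \<alpha>) / (2 * \<alpha>)) 1)
     / ((\<alpha> - 1) * \<tau> powr (\<alpha> - 1))"

lemma orth_distance_self: "0 < \<tau> \<Longrightarrow> orth_distance \<alpha> \<tau> \<tau> = 0"
  by (simp add: orth_distance_def)

lemma continuous_on_orth_distance:
  assumes "0 < \<alpha>" "\<alpha> \<noteq> 1" "0 < \<tau>"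
  shows "continuous_on {0<..\<tau>} (orth_distance \<alpha> \<tau>)"
proof -
  have "(\<lambda>t. (t / \<tau>) powr (2 * \<alpha>)) ` {0<..\<tau>} \<subseteq> {0<..1}"
    using assms by (auto intro!: powr_le1)
  moreover have "continuous_on {0<..\<tau>} (\<lambda>t. (t / \<tau>) powr (2 * \<alpha>))"
    using assms by (intro continuous_intros) auto
  ultimately have "continuous_on {0<..\<tau>} (\<lambda>t. beta_prim ((1 - \<alpha>) / (2 * \<alpha>)) ((t / \<tau>) powr (2 * \<alpha>)))"
    using beta_exponent_bounds[OF assms(1,2)]
    by (intro continuous_on_compose2[OF continuous_on_beta_prim]) auto
  then show ?thesis
    unfolding orth_distance_def [abs_def] using assms by (intro continuous_intros) auto
qed

lemma has_real_derivative_orth_distance: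
  assumes "0 < \<alpha>" "\<alpha> \<noteq> 1" "0 < t" "t < \<tau>"
  shows "(orth_distance \<alpha> \<tau> has_real_derivative
           - 1 / (scale \<alpha> t * sqrt (1 - (scale \<alpha> t)\<^sup>2 / (scale \<alpha> \<tau>)\<^sup>2))) (at t)"
proof -
  define b where "b = (1 - \<alpha>) / (2 * \<alpha>)"
  define w where "w = (t / \<tau>) powr (2 * \<alpha>)"
  define p q where "p = scale \<alpha> t" and "q = scale \<alpha> \<tau>"
  have b: "-1 < b" "b \<noteq> 0" "2 * \<alpha> * b = 1 - \<alpha>"
    using assms by (auto simp: b_def field_simps)
  have pq: "0 < p" "0 < q" "(t / \<tau>) powr \<alpha> = p / q"
    using assms by (simp_all add: p_def q_def scale_def powr_divide)
  have w_pq: "w = (p / q)\<^sup>2"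
    by (simp add: w_def pq(3)[symmetric] power2_eq_square flip: powr_add mult_2)
  have "p < q"
    using assms by (simp add: p_def q_def scale_def powr_less_mono2)
  then have w: "0 < w" "w < 1"
    using pq by (simp_all add: w_pq power_less_one_iff)
  have dw: "((\<lambda>t. (t / \<tau>) powr (2 * \<alpha>)) has_real_derivative 2 * \<alpha> * w / t) (at t)"
    using assms by (auto intro!: derivative_eq_intros simp: w_def powr_diff field_simps)
  have "(orth_distance \<alpha> \<tau> has_real_derivative
      (b * w powr (b - 1) * (1 - w) powr (-1/2) * (2 * \<alpha> * w / t) - 0) / ((\<alpha> - 1) * \<tau> powr (\<alpha> - 1)))
      (at t)"
    unfolding orth_distance_def [abs_def] b_def [symmetric]
    using DERIV_chain2[OF has_real_derivative_beta_prim[OF b(1,2) w, unfolded w_def] dw[unfolded w_def]]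
    unfolding w_def by (intro DERIV_cdivide DERIV_diff DERIV_const)
  moreover have "w powr (b - 1) * w = t * q / (\<tau> * p)"
  proof -
    have "w powr (b - 1) * w = (t / \<tau>) powr (2 * \<alpha> * b)"
      using w(1) by (simp add: w_def powr_diff powr_powr)
    also have "\<dots> = (t / \<tau>) / (t / \<tau>) powr \<alpha>"
      using assms by (simp add: b(3) powr_diff)
    finally show ?thesis
      using pq assms by (simp add: field_simps)
  qed
  moreover have "(1 - w) powr (-1/2) = 1 / sqrt (1 - w)"
    using w by (simp add: powr_minus_divide powr_half_sqrt)
  moreover have "\<tau> powr (\<alpha> - 1) = q / \<tau>"
    using assms by (simp add: q_def scale_def powr_diff)
  moreover have "(b * w powr (b - 1) * (1 - w) powr (-1/2) * (2 * \<alpha> * w / t) - 0)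
      / ((\<alpha> - 1) * \<tau> powr (\<alpha> - 1))
      = (2 * \<alpha> * b) * (w powr (b - 1) * w) * (1 - w) powr (-1/2) / (t * (\<alpha> - 1) * \<tau> powr (\<alpha> - 1))"
    by (simp add: mult_ac)
  moreover have "(1 - \<alpha>) * (t * q / (\<tau> * p)) * (1 / sqrt (1 - w)) / (t * (\<alpha> - 1) * (q / \<tau>))
      = - 1 / (p * sqrt (1 - w))"
    using assms pq w by (simp add: field_simps)
  ultimately show ?thesis
    by (simp only: b(3) w_pq p_def q_def power_divide)
qed

lemma F_fun_eq_beta_prim:
  assumes "0 < \<alpha>" "\<alpha> \<noteq> 1" "0 < z"
  shows "F_fun \<alpha> z = beta_prim ((1 - \<alpha>) / (2 * \<alpha>)) (z\<^sup>2)"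
proof -
  define b where "b = (1 - \<alpha>) / (2 * \<alpha>)"
  have b: "-1 < b" "b \<noteq> 0" "(1 + \<alpha>) / (2 * \<alpha>) = b + 1" "(1 - \<alpha>) / \<alpha> = 2 * b"
    using assms by (auto simp: b_def field_simps)
  have "(z\<^sup>2) powr b = (z powr 2) powr b"
    using assms(3) by (simp add: powr_numeral)
  also have "\<dots> = z powr ((1 - \<alpha>) / \<alpha>)"
    by (simp add: powr_powr b(4))
  finally show ?thesis
    unfolding F_fun_def beta_prim_def b_def [symmetric] b(3) hyp2F1_half_eq_beta_series[OF b(1,2)]
    by simp
qed

lemma C_const_eq_beta_prim:
  assumes "0 < \<alpha>" "\<alpha> \<noteq> 1"
  shows "C_const \<alpha> = beta_prim ((1 - \<alpha>) / (2 * \<alpha>)) 1"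
proof -
  define b where "b = (1 - \<alpha>) / (2 * \<alpha>)"
  have "b + 1 = (1 + \<alpha>) / (2 * \<alpha>)" "b + 1/2 = 1 / (2 * \<alpha>)"
    using assms by (auto simp: b_def field_simps)
  then show ?thesis
    using beta_series_one[OF beta_exponent_bounds[OF assms], folded b_def]
    unfolding C_const_def beta_prim_def b_def [symmetric] by simp
qed

lemma inj_on_F_fun:
  assumes "0 < \<alpha>" "\<alpha> \<noteq> 1"
  shows "inj_on (F_fun \<alpha>) {0<..<1}"
proof (rule inj_onI)
  fix x y assume x: "x \<in> {0<..<1}" and y: "y \<in> {0<..<1}" and "F_fun \<alpha> x = F_fun \<alpha> y"
  then have "beta_prim ((1 - \<alpha>) / (2 * \<alpha>)) (x\<^sup>2) = beta_prim ((1 - \<alpha>) / (2 * \<alpha>)) (y\<^sup>2)"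
    using assms by (simp add: F_fun_eq_beta_prim)
  moreover have "x\<^sup>2 \<in> {0<..<1}" "y\<^sup>2 \<in> {0<..<1}"
    using x y by (auto simp: power_less_one_iff)
  moreover have "-1 < (1 - \<alpha>) / (2 * \<alpha>)" "(1 - \<alpha>) / (2 * \<alpha>) \<noteq> 0"
    using beta_exponent_bounds[OF assms] by auto
  ultimately have "x\<^sup>2 = y\<^sup>2"
    using inj_onD[OF inj_on_beta_prim] by blast
  then show "x = y"
    using x y by (simp add: power2_eq_iff_nonneg)
qed

lemma scale_ratio_sq:
  assumes "0 < t" "0 < \<tau>"
  shows "(scale \<alpha> t)\<^sup>2 / (scale \<alpha> \<tau>)\<^sup>2 = ((t / \<tau>) powr \<alpha>)\<^sup>2"
  using assms by (simp add: scale_def powr_divide power_divide)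

lemma powr_sq_eq_powr_double: "0 < x \<Longrightarrow> (x powr \<alpha>)\<^sup>2 = x powr (2 * \<alpha>)"
  for x :: real
  by (simp add: power2_eq_square flip: powr_add mult_2)

lemma f_inv_eq_orth_distance:
  assumes "0 < \<alpha>" "\<alpha> \<noteq> 1" "0 < t" "t \<le> \<tau>"
  shows "f_inv \<alpha> (sqrt (1 - (scale \<alpha> t)\<^sup>2 / (scale \<alpha> \<tau>)\<^sup>2)) = scale' \<alpha> \<tau> * orth_distance \<alpha> \<tau> t"
proof -
  define b z where "b = (1 - \<alpha>) / (2 * \<alpha>)" and "z = (t / \<tau>) powr \<alpha>"
  have z: "0 < z" "z \<le> 1"
    using assms by (auto simp: z_def powr_le1)
  then have "sqrt (1 - (sqrt (1 - z\<^sup>2))\<^sup>2) = z"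
    by (simp add: power_le_one)
  then have "f_inv \<alpha> (sqrt (1 - (scale \<alpha> t)\<^sup>2 / (scale \<alpha> \<tau>)\<^sup>2))
      = \<alpha> / (\<alpha> - 1) * (beta_prim b (z\<^sup>2) - beta_prim b 1)"
    using assms z
    by (simp add: f_inv_def scale_ratio_sq F_fun_eq_beta_prim C_const_eq_beta_prim
        flip: z_def b_def)
  also have "z\<^sup>2 = (t / \<tau>) powr (2 * \<alpha>)"
    using assms by (simp add: z_def powr_sq_eq_powr_double)
  also have "\<alpha> / (\<alpha> - 1) = scale' \<alpha> \<tau> / ((\<alpha> - 1) * \<tau> powr (\<alpha> - 1))"
    using assms by (simp add: scale'_def)
  finally show ?thesis
    by (simp add: orth_distance_def b_def)
qed

lemma G_fun_orth_distance:
  assumes "0 < \<alpha>" "\<alpha> \<noteq> 1" "0 < t" "t < \<tau>"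
  shows "G_fun \<alpha> (scale' \<alpha> \<tau> * orth_distance \<alpha> \<tau> t) = t / \<tau>"
proof -
  define z where "z = (t / \<tau>) powr \<alpha>"
  have z: "z \<in> {0<..<1}"
    using assms by (auto simp: z_def powr_less_mono2[of \<alpha> "t / \<tau>" 1, simplified])
  have "C_const \<alpha> + (\<alpha> - 1) / \<alpha> * (scale' \<alpha> \<tau> * orth_distance \<alpha> \<tau> t)
      = beta_prim ((1 - \<alpha>) / (2 * \<alpha>)) ((t / \<tau>) powr (2 * \<alpha>))"
    using assms by (simp add: orth_distance_def scale'_def C_const_eq_beta_prim)
  also have "\<dots> = F_fun \<alpha> z"
    using assms z by (simp add: F_fun_eq_beta_prim z_def powr_sq_eq_powr_double)
  finally have "G_fun \<alpha> (scale' \<alpha> \<tau> * orth_distance \<alpha> \<tau> t) = z powr (1 / \<alpha>)"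
    using inv_into_f_f[OF inj_on_F_fun[OF assms(1,2)] z] by (simp add: G_fun_def)
  then show ?thesis
    using assms by (simp add: z_def powr_powr)
qed

lemma one_minus_kin_vel_sq_powr:
  assumes "0 < \<alpha>" "0 < t" "t \<le> \<tau>" "c \<noteq> cj"
  shows "(1 - (kin_vel \<alpha> \<tau> cj t c)\<^sup>2) powr ((1 - \<alpha>) / (2 * \<alpha>)) = (t / \<tau>) powr (1 - \<alpha>)"
proof -
  have "(scale \<alpha> t)\<^sup>2 / (scale \<alpha> \<tau>)\<^sup>2 \<le> 1"
    using assms by (simp add: scale_ratio_sq power_le_one powr_le1)
  moreover have "(sgn (c - cj))\<^sup>2 = 1"
    using assms(4) by (simp add: sgn_if)
  ultimately have "1 - (kin_vel \<alpha> \<tau> cj t c)\<^sup>2 = (t / \<tau>) powr (2 * \<alpha>)"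
    using assms by (simp add: kin_vel_def power_mult_distrib scale_ratio_sq powr_sq_eq_powr_double)
  then show ?thesis
    using assms by (simp add: powr_powr)
qed

lemma scale'_mult_ratio_powr:
  assumes "0 < t" "0 < \<tau>"
  shows "(t / \<tau>) powr (1 - \<alpha>) * scale' \<alpha> t = scale' \<alpha> \<tau>"
  using assms by (simp add: scale'_def powr_divide powr_diff field_simps)

section \<open>Geodesics orthogonal to a comoving worldline\<close>

lemma Icc_subset_interval:
  fixes I :: "real set"
  assumes "is_interval I" "u \<in> I" "v \<in> I"
  shows "{u..v} \<subseteq> I"
  using assms(1)[unfolded is_interval_1, rule_format, OF assms(2,3)] by auto

lemma at_within_interval:
  fixes I :: "real set"
  assumes "is_interval I" "u \<in> I" "v \<in> I" "u < s" "s < v"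
  shows "at s within I = at s"
  using Icc_subset_interval[OF assms(1-3)] assms(4,5)
  by (intro at_within_open_subset[of s "{u<..<v}"]) auto

lemma has_real_derivative_pos_imp_less_on_interval:
  fixes f f' :: "real \<Rightarrow> real" and I :: "real set"
  assumes I: "is_interval I" "u \<in> I" "v \<in> I" and "u < v"
    and deriv: "\<And>s. s \<in> I \<Longrightarrow> (f has_real_derivative f' s) (at s within I)"
    and pos: "\<And>s. u < s \<Longrightarrow> s < v \<Longrightarrow> 0 < f' s"
  shows "f u < f v"
proof (rule DERIV_pos_imp_increasing_open[OF \<open>u < v\<close>])
  have "{u..v} \<subseteq> I"
    by (rule Icc_subset_interval[OF I])
  then show "continuous_on {u..v} f"
    using DERIV_continuous_on[OF deriv] continuous_on_subset by blast
  show "\<exists>y. (f has_real_derivative y) (at s) \<and> 0 < y" if "u < s" "s < v" for s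
  proof -
    have "s \<in> I"
      using \<open>{u..v} \<subseteq> I\<close> that by auto
    then show ?thesis
      using deriv[of s] pos[OF that] at_within_interval[OF I that] by auto
  qed
qed

lemma has_real_derivative_neg_imp_less_on_interval:
  fixes f f' :: "real \<Rightarrow> real" and I :: "real set"
  assumes "is_interval I" "u \<in> I" "v \<in> I" "u < v"
    and "\<And>s. s \<in> I \<Longrightarrow> (f has_real_derivative f' s) (at s within I)"
    and "\<And>s. u < s \<Longrightarrow> s < v \<Longrightarrow> f' s < 0"
  shows "f v < f u"
  using has_real_derivative_pos_imp_less_on_interval[of I u v "\<lambda>s. - f s" "\<lambda>s. - f' s"] assms
  by (auto intro: DERIV_minus)

locale orth_geodesic_vel =
  fixes \<alpha> \<tau> cj :: real and T X T' X' :: "real \<Rightarrow> real" and I :: "real set"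
  assumes alpha_pos: "0 < \<alpha>"
    and interval: "is_interval I" and zero_in: "0 \<in> I"
    and T_0: "T 0 = \<tau>" and X_0: "X 0 = cj" and T_pos: "\<And>s. s \<in> I \<Longrightarrow> 0 < T s"
    and T'_0: "T' 0 = 0" and X'_0: "X' 0 \<noteq> 0"
    and T_deriv: "\<And>s. s \<in> I \<Longrightarrow> (T has_real_derivative T' s) (at s within I)"
    and X_deriv: "\<And>s. s \<in> I \<Longrightarrow> (X has_real_derivative X' s) (at s within I)"
    and T'_deriv: "\<And>s. s \<in> I \<Longrightarrow> (T' has_real_derivative
              (- scale \<alpha> (T s) * scale' \<alpha> (T s) * (X' s)\<^sup>2)) (at s within I)"
    and X'_deriv: "\<And>s. s \<in> I \<Longrightarrow> (X' has_real_derivative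
              (- 2 * (scale' \<alpha> (T s) / scale \<alpha> (T s)) * T' s * X' s)) (at s within I)"

lemma orth_geodesic_imp_vel:
  assumes "0 < \<alpha>" "orth_geodesic \<alpha> \<tau> cj T X I"
  obtains T' X' where "orth_geodesic_vel \<alpha> \<tau> cj T X T' X' I"
  using assms unfolding orth_geodesic_def orth_geodesic_vel_def by blast

context orth_geodesic_vel
begin

lemma tau_pos: "0 < \<tau>"
  using T_pos[OF zero_in] T_0 by simp

lemma scale_T_pos:
  assumes "s \<in> I"
  shows "0 < scale \<alpha> (T s)"
  using T_pos[OF assms] by (simp add: scale_def)

lemma scale_T_deriv:
  "s \<in> I \<Longrightarrow> ((\<lambda>s. scale \<alpha> (T s)) has_real_derivative scale' \<alpha> (T s) * T' s) (at s within I)"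
  unfolding scale_def scale'_def using T_pos
  by (auto intro!: derivative_eq_intros T_deriv)

definition momentum :: real where
  "momentum = (scale \<alpha> \<tau>)\<^sup>2 * X' 0"

lemma momentum_conserved:
  assumes "s \<in> I"
  shows "(scale \<alpha> (T s))\<^sup>2 * X' s = momentum"
proof -
  have "\<exists>c. \<forall>s\<in>I. (scale \<alpha> (T s))\<^sup>2 * X' s = c"
  proof (rule has_field_derivative_zero_constant)
    show "convex I"
      by (rule is_interval_convex[OF interval])
    fix s assume s: "s \<in> I"
    define A A' where "A = scale \<alpha> (T s)" and "A' = scale' \<alpha> (T s)"
    have "((\<lambda>s. (scale \<alpha> (T s))\<^sup>2 * X' s) has_real_derivative
        of_nat 2 * (A' * T' s * A ^ (2 - Suc 0)) * X' s + (- 2 * (A' / A) * T' s * X' s) * A\<^sup>2)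
        (at s within I)"
      unfolding A_def A'_def by (intro DERIV_mult DERIV_power scale_T_deriv X'_deriv s)
    also have "of_nat 2 * (A' * T' s * A ^ (2 - Suc 0)) * X' s + (- 2 * (A' / A) * T' s * X' s) * A\<^sup>2 = 0"
      using scale_T_pos[OF s] by (simp add: A_def power2_eq_square)
    finally show "((\<lambda>s. (scale \<alpha> (T s))\<^sup>2 * X' s) has_real_derivative 0) (at s within I)" .
  qed
  then show ?thesis
    using assms zero_in by (force simp: momentum_def T_0)
qed

lemma energy_conserved:
  assumes "s \<in> I"
  shows "(scale \<alpha> (T s))\<^sup>2 * (X' s)\<^sup>2 - (T' s)\<^sup>2 = (scale \<alpha> \<tau>)\<^sup>2 * (X' 0)\<^sup>2"
proof -
  have "\<exists>c. \<forall>s\<in>I. (scale \<alpha> (T s))\<^sup>2 * (X' s)\<^sup>2 - (T' s)\<^sup>2 = c"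
  proof (rule has_field_derivative_zero_constant)
    show "convex I"
      by (rule is_interval_convex[OF interval])
    fix s assume s: "s \<in> I"
    define A A' where "A = scale \<alpha> (T s)" and "A' = scale' \<alpha> (T s)"
    have "((\<lambda>s. (scale \<alpha> (T s))\<^sup>2 * (X' s)\<^sup>2 - (T' s)\<^sup>2) has_real_derivative
        of_nat 2 * (A' * T' s * A ^ (2 - Suc 0)) * (X' s)\<^sup>2
          + of_nat 2 * (- 2 * (A' / A) * T' s * X' s * X' s ^ (2 - Suc 0)) * A\<^sup>2
          - of_nat 2 * (- A * A' * (X' s)\<^sup>2 * T' s ^ (2 - Suc 0)))
        (at s within I)"
      unfolding A_def A'_def
      by (intro DERIV_diff DERIV_mult DERIV_power scale_T_deriv X'_deriv T'_deriv s)
    also have "of_nat 2 * (A' * T' s * A ^ (2 - Suc 0)) * (X' s)\<^sup>2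
          + of_nat 2 * (- 2 * (A' / A) * T' s * X' s * X' s ^ (2 - Suc 0)) * A\<^sup>2
          - of_nat 2 * (- A * A' * (X' s)\<^sup>2 * T' s ^ (2 - Suc 0)) = 0"
      using scale_T_pos[OF s] by (simp add: A_def power2_eq_square algebra_simps)
    finally show "((\<lambda>s. (scale \<alpha> (T s))\<^sup>2 * (X' s)\<^sup>2 - (T' s)\<^sup>2) has_real_derivative 0)
        (at s within I)" .
  qed
  then show ?thesis
    using assms zero_in by (force simp: T_0 T'_0)
qed

lemma momentum_ne_zero: "momentum \<noteq> 0"
  using X'_0 tau_pos by (simp add: momentum_def scale_def)

lemma X'_eq:
  assumes "s \<in> I"
  shows "X' s = momentum / (scale \<alpha> (T s))\<^sup>2"
  using momentum_conserved[OF assms] scale_T_pos[OF assms] by (simp add: eq_divide_eq mult.commute)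

lemma abs_T'_eq:
  assumes "s \<in> I"
  shows "\<bar>T' s\<bar> = \<bar>momentum\<bar> / scale \<alpha> (T s) * sqrt (1 - (scale \<alpha> (T s))\<^sup>2 / (scale \<alpha> \<tau>)\<^sup>2)"
proof -
  define A B L where "A = scale \<alpha> (T s)" and "B = scale \<alpha> \<tau>" and "L = momentum"
  have A: "0 < A" and B: "0 < B"
    using scale_T_pos[OF assms] scale_T_pos[OF zero_in] by (simp_all add: A_def B_def T_0)
  have "(T' s)\<^sup>2 = A\<^sup>2 * (L / A\<^sup>2)\<^sup>2 - B\<^sup>2 * (L / B\<^sup>2)\<^sup>2"
    using energy_conserved[OF assms] X'_eq[OF assms] X'_eq[OF zero_in]
    by (simp add: A_def B_def L_def T_0)
  also have "\<dots> = (L / A)\<^sup>2 * (1 - A\<^sup>2 / B\<^sup>2)"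
    using A B by (simp add: field_simps power2_eq_square)
  finally have "\<bar>T' s\<bar> = sqrt ((L / A)\<^sup>2 * (1 - A\<^sup>2 / B\<^sup>2))"
    by (metis real_sqrt_abs)
  also have "\<dots> = \<bar>L\<bar> / A * sqrt (1 - A\<^sup>2 / B\<^sup>2)"
    using A by (simp add: real_sqrt_mult)
  finally show ?thesis
    by (simp add: A_def B_def L_def)
qed

lemma T''_neg:
  assumes "s \<in> I"
  shows "- scale \<alpha> (T s) * scale' \<alpha> (T s) * (X' s)\<^sup>2 < 0"
proof -
  have "X' s \<noteq> 0"
    using X'_eq[OF assms] momentum_ne_zero scale_T_pos[OF assms] by simp
  moreover have "0 < scale' \<alpha> (T s)"
    using T_pos[OF assms] alpha_pos by (simp add: scale'_def)
  ultimately show ?thesis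
    using scale_T_pos[OF assms] by simp
qed

lemma T'_decreasing:
  assumes "u \<in> I" "v \<in> I" "u < v"
  shows "T' v < T' u"
proof (rule has_real_derivative_neg_imp_less_on_interval[OF interval assms T'_deriv])
  fix s assume "u < s" "s < v"
  then have "s \<in> I"
    using Icc_subset_interval[OF interval assms(1,2)] by auto
  then show "- scale \<alpha> (T s) * scale' \<alpha> (T s) * (X' s)\<^sup>2 < 0"
    by (rule T''_neg)
qed

lemma sgn_T':
  assumes "s \<in> I"
  shows "sgn (T' s) = - sgn s"
proof -
  consider "s = 0" | "0 < s" | "s < 0"
    by linarith
  then show ?thesis
    by cases (use T'_0 T'_decreasing[OF zero_in assms] T'_decreasing[OF assms zero_in] in auto)
qed

lemma T_less_tau:
  assumes "s \<in> I" "s \<noteq> 0"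
  shows "T s < \<tau>"
proof -
  consider "0 < s" | "s < 0"
    using assms(2) by linarith
  then have "T s < T 0"
  proof cases
    case 1
    have "T' u < 0" if "0 < u" "u < s" for u
    proof -
      have "u \<in> I"
        using that Icc_subset_interval[OF interval zero_in assms(1)] by auto
      then show ?thesis
        using sgn_T'[of u] that by (simp add: sgn_if split: if_splits)
    qed
    then show ?thesis
      by (intro has_real_derivative_neg_imp_less_on_interval[OF interval zero_in assms(1) 1 T_deriv])
  next
    case 2
    have "0 < T' u" if "s < u" "u < 0" for u
    proof -
      have "u \<in> I"
        using that Icc_subset_interval[OF interval assms(1) zero_in] by auto
      then show ?thesis
        using sgn_T'[of u] that by (simp add: sgn_if split: if_splits)
    qed
    then show ?thesis
      by (intro has_real_derivative_pos_imp_less_on_interval[OF interval assms(1) zero_in 2 T_deriv])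
  qed
  then show ?thesis
    by (simp add: T_0)
qed

lemma T_le_tau: "s \<in> I \<Longrightarrow> T s \<le> \<tau>"
  using T_less_tau[of s] T_0 by (cases "s = 0") auto

lemma sgn_X_minus:
  assumes "s \<in> I"
  shows "sgn (X s - cj) = sgn s * sgn momentum"
proof -
  have deriv: "((\<lambda>u. sgn momentum * X u) has_real_derivative sgn momentum * X' u) (at u within I)"
    if "u \<in> I" for u
    by (intro DERIV_cmult X_deriv that)
  have pos: "0 < sgn momentum * X' u" if "u \<in> I" for u
    using X'_eq[OF that] scale_T_pos[OF that] momentum_ne_zero
    by (cases "0 < momentum") (auto simp: sgn_if divide_neg_pos)
  consider "s = 0" | "0 < s" | "s < 0"
    by linarith
  then show ?thesis
  proof cases
    case 2
    then have "sgn momentum * X 0 < sgn momentum * X s"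
      using pos subsetD[OF Icc_subset_interval[OF interval zero_in assms]]
      by (intro has_real_derivative_pos_imp_less_on_interval[OF interval zero_in assms 2 deriv]) auto
    then show ?thesis
      using 2 momentum_ne_zero by (cases "0 < momentum") (auto simp: X_0 sgn_if)
  next
    case 3
    then have "sgn momentum * X s < sgn momentum * X 0"
      using pos subsetD[OF Icc_subset_interval[OF interval assms zero_in]]
      by (intro has_real_derivative_pos_imp_less_on_interval[OF interval assms zero_in 3 deriv]) auto
    then show ?thesis
      using 3 momentum_ne_zero by (cases "0 < momentum") (auto simp: X_0 sgn_if)
  qed (simp add: X_0)
qed

lemma has_real_derivative_orth_distance_T:
  assumes "\<alpha> \<noteq> 1" "u \<in> I" "v \<in> I" "u < x" "x < v" "x \<noteq> 0"
  shows "((\<lambda>s. orth_distance \<alpha> \<tau> (T s)) has_real_derivative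
           sgn x * \<bar>momentum\<bar> / (scale \<alpha> (T x))\<^sup>2) (at x)"
proof -
  have xI: "x \<in> I"
    using Icc_subset_interval[OF interval assms(2,3)] assms(4,5) by auto
  define A S where "A = scale \<alpha> (T x)" and "S = sqrt (1 - A\<^sup>2 / (scale \<alpha> \<tau>)\<^sup>2)"
  have Tx: "0 < T x" "T x < \<tau>"
    using T_pos[OF xI] T_less_tau[OF xI assms(6)] by auto
  then have "A < scale \<alpha> \<tau>"
    using alpha_pos by (simp add: A_def scale_def powr_less_mono2)
  then have "0 < A" "0 < S"
    using scale_T_pos[OF xI] by (auto simp: A_def S_def power_strict_mono)
  have "T' x = sgn (T' x) * \<bar>T' x\<bar>"
    by (simp add: sgn_mult_abs)
  then have T'x: "T' x = - sgn x * (\<bar>momentum\<bar> / A * S)"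
    using abs_T'_eq[OF xI] sgn_T'[OF xI] by (simp add: A_def S_def)
  have "((\<lambda>s. orth_distance \<alpha> \<tau> (T s)) has_real_derivative - 1 / (A * S) * T' x) (at x)"
    using has_real_derivative_orth_distance[OF alpha_pos assms(1) Tx, folded A_def, folded S_def]
      T_deriv[OF xI, unfolded at_within_interval[OF interval assms(2-5)]]
    by (rule DERIV_chain2)
  moreover have "- 1 / (A * S) * T' x = sgn x * \<bar>momentum\<bar> / A\<^sup>2"
    using \<open>0 < A\<close> \<open>0 < S\<close> by (simp add: T'x field_simps power2_eq_square)
  ultimately show ?thesis
    by (simp add: A_def)
qed

text \<open>orth_distance \<alpha> \<tau> is not differentiable at \<tau> = T 0, so its derivative is only used
  strictly between 0 and s.\<close>

lemma orth_distance_T: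
  assumes "\<alpha> \<noteq> 1" "s \<in> I"
  shows "orth_distance \<alpha> \<tau> (T s) = \<bar>X s - cj\<bar>"
proof (cases "s = 0")
  case True
  then show ?thesis
    using tau_pos by (simp add: T_0 X_0 orth_distance_self)
next
  case False
  define \<sigma> where "\<sigma> = sgn s * sgn momentum"
  define \<Psi> where "\<Psi> u = orth_distance \<alpha> \<tau> (T u) - \<sigma> * (X u - cj)" for u
  define lo hi where "lo = min 0 s" and "hi = max 0 s"
  have lohi: "lo < hi" "lo \<in> I" "hi \<in> I"
    using False assms(2) zero_in by (auto simp: lo_def hi_def min_def max_def)
  have sub: "{lo..hi} \<subseteq> I"
    by (rule Icc_subset_interval[OF interval lohi(2,3)])
  have "continuous_on {lo..hi} \<Psi>"
  proof -
    have "continuous_on {lo..hi} T" "continuous_on {lo..hi} X"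
      using DERIV_continuous_on[OF T_deriv] DERIV_continuous_on[OF X_deriv] sub
      by (auto intro: continuous_on_subset)
    moreover have "T ` {lo..hi} \<subseteq> {0<..\<tau>}"
      using sub T_pos T_le_tau by auto
    ultimately show ?thesis
      unfolding \<Psi>_def [abs_def] using alpha_pos assms(1) tau_pos
      by (intro continuous_intros continuous_on_compose2[OF continuous_on_orth_distance]) auto
  qed
  moreover have "(\<Psi> has_real_derivative 0) (at x)" if x: "lo < x" "x < hi" for x
  proof -
    have xI: "x \<in> I" and "sgn x = sgn s" and "x \<noteq> 0"
      using x sub by (auto simp: lo_def hi_def sgn_if min_def max_def split: if_splits)
    have "(\<Psi> has_real_derivative
        sgn x * \<bar>momentum\<bar> / (scale \<alpha> (T x))\<^sup>2 - \<sigma> * (X' x - 0)) (at x)"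
      unfolding \<Psi>_def [abs_def]
      by (intro DERIV_diff DERIV_cmult DERIV_const
          has_real_derivative_orth_distance_T[OF assms(1) lohi(2,3) x \<open>x \<noteq> 0\<close>]
          X_deriv[OF xI, unfolded at_within_interval[OF interval lohi(2,3) x]])
    moreover have "\<sigma> * X' x = sgn x * \<bar>momentum\<bar> / (scale \<alpha> (T x))\<^sup>2"
      using X'_eq[OF xI] \<open>sgn x = sgn s\<close> by (simp add: \<sigma>_def abs_sgn mult.commute)
    ultimately show ?thesis
      by simp
  qed
  ultimately have "\<Psi> hi = \<Psi> lo"
    by (rule DERIV_isconst_end[OF lohi(1)])
  then have "\<Psi> s = \<Psi> 0"
    by (auto simp: lo_def hi_def min_def max_def split: if_splits)
  moreover have "\<sigma> * (X s - cj) = \<bar>X s - cj\<bar>"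
    using sgn_X_minus[OF assms(2)] abs_sgn[of "X s - cj"] by (simp add: \<sigma>_def mult.commute)
  ultimately show ?thesis
    using tau_pos by (simp add: \<Psi>_def T_0 X_0 orth_distance_self)
qed

lemma kin_vel_T:
  assumes "s \<in> I" "cj < X s"
  shows "kin_vel \<alpha> \<tau> cj (T s) (X s) = sqrt (1 - (scale \<alpha> (T s))\<^sup>2 / (scale \<alpha> \<tau>)\<^sup>2)"
  using assms by (simp add: kin_vel_def)

lemma f_inv_kin_vel:
  assumes "\<alpha> \<noteq> 1" "s \<in> I" "cj < X s"
  shows "f_inv \<alpha> (kin_vel \<alpha> \<tau> cj (T s) (X s)) = scale' \<alpha> \<tau> * (X s - cj)"
  using assms orth_distance_T[OF assms(1,2)]
  by (simp add: kin_vel_T f_inv_eq_orth_distance[OF alpha_pos assms(1) T_pos T_le_tau])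

lemma kin_vel_eq_G_fun:
  assumes "\<alpha> \<noteq> 1" "s \<in> I" "cj < X s"
  shows "kin_vel \<alpha> \<tau> cj (T s) (X s) = sqrt (1 - G_fun \<alpha> (scale' \<alpha> \<tau> * (X s - cj)) powr (2 * \<alpha>))"
proof -
  have "s \<noteq> 0"
    using assms(3) X_0 by auto
  then have "G_fun \<alpha> (scale' \<alpha> \<tau> * (X s - cj)) = T s / \<tau>"
    using assms orth_distance_T[OF assms(1,2)] T_pos[OF assms(2)] T_less_tau[OF assms(2)]
    by (simp add: G_fun_orth_distance[OF alpha_pos assms(1), symmetric])
  then show ?thesis
    using assms T_pos[OF assms(2)] tau_pos
    by (simp add: kin_vel_T scale_ratio_sq powr_sq_eq_powr_double)
qed

end

theorem corollary2:
  fixes \<alpha> \<tau>0 \<tau>1 t2 t3 c1 c2 s1 s2 s3 :: real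
    and T0 X0 T1 X1 :: "real \<Rightarrow> real" and I0 I1 :: "real set"
  assumes "0 < \<alpha>" and "\<alpha> \<noteq> 1"
    and "0 < c1" and "c1 < c2" and "0 < \<tau>0"
    and "orth_geodesic \<alpha> \<tau>0 0 T0 X0 I0"
    and "s1 \<in> I0" and "T0 s1 = \<tau>1" and "X0 s1 = c1"
    and "s3 \<in> I0" and "T0 s3 = t3" and "X0 s3 = c2"
    and "orth_geodesic \<alpha> \<tau>1 c1 T1 X1 I1"
    and "s2 \<in> I1" and "T1 s2 = t2" and "X1 s2 = c2"
  shows "kin_vel \<alpha> \<tau>0 0 t3 c2 =
    sqrt (1 - G_fun \<alpha> (f_inv \<alpha> (kin_vel \<alpha> \<tau>0 0 \<tau>1 c1)
               + (1 - (kin_vel \<alpha> \<tau>0 0 \<tau>1 c1)\<^sup>2) powr ((1 - \<alpha>) / (2 * \<alpha>))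
                 * f_inv \<alpha> (kin_vel \<alpha> \<tau>1 c1 t2 c2)) powr (2 * \<alpha>))"
proof -
  obtain T0' X0' where g0: "orth_geodesic_vel \<alpha> \<tau>0 0 T0 X0 T0' X0' I0"
    using orth_geodesic_imp_vel[OF assms(1,6)] .
  obtain T1' X1' where g1: "orth_geodesic_vel \<alpha> \<tau>1 c1 T1 X1 T1' X1' I1"
    using orth_geodesic_imp_vel[OF assms(1,13)] .
  have \<tau>1: "0 < \<tau>1" "\<tau>1 \<le> \<tau>0"
    using orth_geodesic_vel.T_pos[OF g0 assms(7)] orth_geodesic_vel.T_le_tau[OF g0 assms(7)] assms(8)
    by auto
  have v1: "f_inv \<alpha> (kin_vel \<alpha> \<tau>0 0 \<tau>1 c1) = scale' \<alpha> \<tau>0 * c1"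
    using orth_geodesic_vel.f_inv_kin_vel[OF g0 assms(2,7)] assms(3,8,9) by simp
  have v2: "f_inv \<alpha> (kin_vel \<alpha> \<tau>1 c1 t2 c2) = scale' \<alpha> \<tau>1 * (c2 - c1)"
    using orth_geodesic_vel.f_inv_kin_vel[OF g1 assms(2,14)] assms(4,15,16) by simp
  have hubble: "(1 - (kin_vel \<alpha> \<tau>0 0 \<tau>1 c1)\<^sup>2) powr ((1 - \<alpha>) / (2 * \<alpha>)) * scale' \<alpha> \<tau>1
      = scale' \<alpha> \<tau>0"
    using \<tau>1 assms(1,3,5) by (simp add: one_minus_kin_vel_sq_powr scale'_mult_ratio_powr)
  have "f_inv \<alpha> (kin_vel \<alpha> \<tau>0 0 \<tau>1 c1)
      + (1 - (kin_vel \<alpha> \<tau>0 0 \<tau>1 c1)\<^sup>2) powr ((1 - \<alpha>) / (2 * \<alpha>)) * f_inv \<alpha> (kin_vel \<alpha> \<tau>1 c1 t2 c2)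
      = scale' \<alpha> \<tau>0 * c2"
    unfolding v1 v2 mult.assoc [symmetric] hubble by (simp add: algebra_simps)
  then show ?thesis
    using orth_geodesic_vel.kin_vel_eq_G_fun[OF g0 assms(2,10)] assms(3,4,11,12) by simp
qed

end
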